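(* Consider the ODE system $$\frac{du}{dt}=\frac{a_1u}{1+fv}-b_1u^2-c_1uv,\qquad \frac{dv}{dt}=a_2v-b_2v^2-c_2uv,$$ with positive parameters $a_1,a_2,b_1,b_2,c_1,c_2$ and $f\ge0$. The boundary equilibrium $E_3=(0,\frac{a_2}{b_2})$ is locally stable (both eigenvalues of the Jacobian at $E_3$ are negative) if and only if $$f>\frac{a_1b_2^2-a_2b_2c_1}{a_2^2c_1}.$$ *)

theory Defs
  imports "HOL-Analysis.Analysis"
begin

definition rhs_u :: "real \<Rightarrow> real \<Rightarrow> real \<Rightarrow> real \<Rightarrow> real \<Rightarrow> real \<Rightarrow> real" where
  "rhs_u a1 b1 c1 f u v = a1 * u / (1 + f * v) - b1 * u^2 - c1 * u * v"

definition rhs_v :: "real \<Rightarrow> real \<Rightarrow> real \<Rightarrow> real \<Rightarrow> real \<Rightarrow> real" where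
  "rhs_v a2 b2 c2 u v = a2 * v - b2 * v^2 - c2 * u * v"

definition jacobian2 :: "(real \<Rightarrow> real \<Rightarrow> real) \<Rightarrow> (real \<Rightarrow> real \<Rightarrow> real) \<Rightarrow> real \<Rightarrow> real \<Rightarrow> real^2^2" where
  "jacobian2 P Q u0 v0 =
     vector [vector [deriv (\<lambda>u. P u v0) u0, deriv (\<lambda>v. P u0 v) v0],
             vector [deriv (\<lambda>u. Q u v0) u0, deriv (\<lambda>v. Q u0 v) v0]]"

definition is_eigenvalue2 :: "real^2^2 \<Rightarrow> complex \<Rightarrow> bool" where
  "is_eigenvalue2 A l \<longleftrightarrow>
     det ((\<chi> i j. (if i = j then l else 0) - complex_of_real (A $ i $ j)) :: complex^2^2) = 0"

end

theory Submission
  imports Defs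
begin

text \<open>At the boundary equilibrium the Jacobian is lower triangular, because the u-equation
  has the factor u. Its eigenvalues are therefore its diagonal entries: -a2, which is always
  negative, and the invasion rate a1/(1 + f v0) - c1 v0 of u into E3, whose sign gives
  the threshold on f.\<close>

lemma is_eigenvalue2_lower_triangular:
  "is_eigenvalue2 (vector [vector [p, 0], vector [r, s]]) l
     \<longleftrightarrow> l = complex_of_real p \<or> l = complex_of_real s"
proof -
  have "is_eigenvalue2 (vector [vector [p, 0], vector [r, s]]) l
          \<longleftrightarrow> (l - complex_of_real p) * (l - complex_of_real s) = 0"
    unfolding is_eigenvalue2_def by (simp add: det_2)
  then show ?thesis by simp
qed

lemma lower_triangular_eigenvalues_negative_iff:
  "(\<forall>l. is_eigenvalue2 (vector [vector [p, 0], vector [r, s]]) l \<longrightarrow> Im l = 0 \<and> Re l < 0)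
     \<longleftrightarrow> p < 0 \<and> s < 0"
  unfolding is_eigenvalue2_lower_triangular by auto

lemma jacobian2_at_boundary:
  assumes "1 + f * v0 \<noteq> 0"
  shows "jacobian2 (rhs_u a1 b1 c1 f) (rhs_v a2 b2 c2) 0 v0
           = vector [vector [a1 / (1 + f * v0) - c1 * v0, 0],
                     vector [- c2 * v0, a2 - 2 * b2 * v0]]"
proof -
  have "((\<lambda>u. rhs_u a1 b1 c1 f u v0) has_real_derivative a1 / (1 + f * v0) - c1 * v0) (at 0)"
    unfolding rhs_u_def using assms by (auto intro!: derivative_eq_intros)
  moreover have "((\<lambda>u. rhs_v a2 b2 c2 u v0) has_real_derivative - c2 * v0) (at 0)"
    unfolding rhs_v_def by (auto intro!: derivative_eq_intros)
  moreover have "((\<lambda>v. rhs_v a2 b2 c2 0 v) has_real_derivative a2 - 2 * b2 * v0) (at v0)"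
    unfolding rhs_v_def by (auto intro!: derivative_eq_intros)
  moreover have "(\<lambda>v. rhs_u a1 b1 c1 f 0 v) = (\<lambda>_. 0)"
    unfolding rhs_u_def by simp
  ultimately show ?thesis
    unfolding jacobian2_def by (simp add: DERIV_imp_deriv)
qed

lemma invasion_rate_negative_iff:
  fixes a1 a2 b2 c1 f :: real
  assumes "a2 > 0" "b2 > 0" "c1 > 0" "f \<ge> 0"
  shows "a1 / (1 + f * (a2 / b2)) - c1 * (a2 / b2) < 0
           \<longleftrightarrow> f > (a1 * b2^2 - a2 * b2 * c1) / (a2^2 * c1)"
proof -
  have den: "1 + f * (a2 / b2) > 0"
    using assms by (simp add: add_pos_nonneg)
  have "a1 / (1 + f * (a2 / b2)) - c1 * (a2 / b2) < 0
          \<longleftrightarrow> a1 < c1 * (a2 / b2) * (1 + f * (a2 / b2))"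
    using den by (simp add: divide_less_eq)
  also have "\<dots> \<longleftrightarrow> a1 * b2^2 < c1 * a2 * (b2 + f * a2)"
    using assms by (simp add: field_simps power2_eq_square)
  also have "\<dots> \<longleftrightarrow> f > (a1 * b2^2 - a2 * b2 * c1) / (a2^2 * c1)"
    using assms by (simp add: divide_less_eq field_simps power2_eq_square)
  finally show ?thesis .
qed

theorem mainTheorem8:
  fixes a1 a2 b1 b2 c1 c2 f :: real
  assumes "a1 > 0" "a2 > 0" "b1 > 0" "b2 > 0" "c1 > 0" "c2 > 0" "f \<ge> 0"
  shows "(\<forall>l. is_eigenvalue2 (jacobian2 (rhs_u a1 b1 c1 f) (rhs_v a2 b2 c2) 0 (a2 / b2)) l
              \<longrightarrow> Im l = 0 \<and> Re l < 0)
         \<longleftrightarrow> f > (a1 * b2^2 - a2 * b2 * c1) / (a2^2 * c1)"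
proof -
  have "1 + f * (a2 / b2) \<noteq> 0"
    using assms by (simp add: add_pos_nonneg less_imp_neq[symmetric])
  moreover have "a2 - 2 * b2 * (a2 / b2) < 0"
    using assms by simp
  ultimately show ?thesis
    using invasion_rate_negative_iff[OF assms(2,4,5,7)]
    by (simp add: jacobian2_at_boundary lower_triangular_eigenvalues_negative_iff)
qed

end
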